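(* Let $k\ge 0$ be an integer and $\mathrm{R}\in\{\mathrm{J},\mathrm{S},\mathrm{AR}\}$. (i) If $\mathrm{R}=\mathrm{S}$ and $k=1$, or if $\mathrm{R}=\mathrm{AR}$ and $k\in\{0,1\}$, then every finite graph $G$ is determined up to isomorphism by $\mathcal{I}^k_{\mathrm{R}}(G)$, i.e. for finite graphs $G,G'$, $\mathcal{I}^k_{\mathrm{R}}(G)\cong\mathcal{I}^k_{\mathrm{R}}(G')$ implies $G\cong G'$. (ii) For every other pair $(\mathrm{R},k)$, there exist non-isomorphic finite graphs $G,G'$ with $\mathcal{I}^k_{\mathrm{R}}(G)\cong\mathcal{I}^k_{\mathrm{R}}(G')$.
   Context: All graphs are finite and simple; an independent set is a set of pairwise non-adjacent vertices. $\mathcal{I}^k_{\mathrm{J}}(G)$ (Token Jumping) has as vertices the independent sets of $G$ of size exactly $k$, with $I,J$ adjacent iff $I\setminus J=\{u\}$ and $J\setminus I=\{v\}$ for some vertices $u\neq v$. $\mathcal{I}^k_{\mathrm{S}}(G)$ (Token Sliding) has the same vertices, with $I,J$ adjacent iff $I\setminus J=\{u\}$, $J\setminus I=\{v\}$ and $uv\in E(G)$. $\mathcal{I}^k_{\mathrm{AR}}(G)$ (Token Addition and Removal) has as vertices the independent sets of $G$ of size at least $k$, with $I,J$ adjacent iff their symmetric difference has exactly one element. *)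

theory Defs
  imports Main
begin

definition fgraph :: "'a set \<Rightarrow> ('a \<times> 'a) set \<Rightarrow> bool" where
  "fgraph V E \<longleftrightarrow> finite V \<and> E \<subseteq> V \<times> V \<and> sym E \<and> (\<forall>x. (x, x) \<notin> E)"

definition graph_iso :: "'a set \<Rightarrow> ('a \<times> 'a) set \<Rightarrow> 'b set \<Rightarrow> ('b \<times> 'b) set \<Rightarrow> bool" where
  "graph_iso V E V' E' \<longleftrightarrow>
     (\<exists>f. bij_betw f V V' \<and> (\<forall>x\<in>V. \<forall>y\<in>V. (x, y) \<in> E \<longleftrightarrow> (f x, f y) \<in> E'))"

definition indep :: "'a set \<Rightarrow> ('a \<times> 'a) set \<Rightarrow> 'a set \<Rightarrow> bool" where
  "indep V E I \<longleftrightarrow> I \<subseteq> V \<and> (\<forall>x\<in>I. \<forall>y\<in>I. (x, y) \<notin> E)"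

datatype rule = TJ | TS | TAR

fun rverts :: "rule \<Rightarrow> 'a set \<Rightarrow> ('a \<times> 'a) set \<Rightarrow> nat \<Rightarrow> 'a set set" where
  "rverts TJ V E k = {I. indep V E I \<and> card I = k}"
| "rverts TS V E k = {I. indep V E I \<and> card I = k}"
| "rverts TAR V E k = {I. indep V E I \<and> card I \<ge> k}"

fun redges :: "rule \<Rightarrow> 'a set \<Rightarrow> ('a \<times> 'a) set \<Rightarrow> nat \<Rightarrow> ('a set \<times> 'a set) set" where
  "redges TJ V E k = {(I, J). I \<in> rverts TJ V E k \<and> J \<in> rverts TJ V E k \<and>
       (\<exists>u v. u \<noteq> v \<and> I - J = {u} \<and> J - I = {v})}"
| "redges TS V E k = {(I, J). I \<in> rverts TS V E k \<and> J \<in> rverts TS V E k \<and>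
       (\<exists>u v. I - J = {u} \<and> J - I = {v} \<and> (u, v) \<in> E)}"
| "redges TAR V E k = {(I, J). I \<in> rverts TAR V E k \<and> J \<in> rverts TAR V E k \<and>
       (\<exists>x. (I - J) \<union> (J - I) = {x})}"

end

(* The hard case is token addition and removal with k = 1.  Let f be an isomorphism between
   the graphs on the nonempty independent sets of G and G'.  For nonadjacent u, v the set {u, v}
   is the only common neighbour of {u} and {v}, which forces |f {u}| = |f {v}|.  If all
   singletons of an independent set Y are mapped to c-sets with c >= 2, then f reverses sizes on
   Y: |f Y| = c + 1 - |Y|; in particular c <= 2.  The vertices v with |f {v}| = 2 span a
   2-regular graph in the complement of G, and after choosing a successor s along its cycles
   the blocks {v} (for |f {v}| = 1) and {v, s v} (for |f {v}| = 2) are exactly the preimages of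
   the singletons of G'.  Non-adjacency of two vertices is equivalent to their blocks having a
   common neighbour, which f preserves, so v |-> the element of f (block v) is an isomorphism.
   For k = 0 the empty set has maximum degree |V|; the isomorphism maps it to a set of isolated
   vertices, and composing with the symmetric difference by that set reduces to k = 1.  For
   token sliding with k = 1 the reconfiguration graph is G itself; in all other cases two
   small non-isomorphic graphs have equal reconfiguration graphs. *)

theory Submission
  imports Defs
begin

lemma fgraphD:
  assumes "fgraph V E"
  shows "finite V" "E \<subseteq> V \<times> V" "(x, y) \<in> E \<Longrightarrow> (y, x) \<in> E" "(x, x) \<notin> E"
  using assms unfolding fgraph_def sym_def by auto

lemma card_2_eq_doubleton: "card X = 2 \<Longrightarrow> a \<in> X \<Longrightarrow> b \<in> X \<Longrightarrow> a \<noteq> b \<Longrightarrow> X = {a, b}"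
  by (auto simp: card_2_iff)

lemma graph_iso_refl: "graph_iso V E V E"
  unfolding graph_iso_def by (intro exI[of _ id]) simp

lemma graph_iso_sym:
  assumes "graph_iso V E V' E'"
  shows "graph_iso V' E' V E"
proof -
  obtain f where f: "bij_betw f V V'" and edges: "\<forall>x\<in>V. \<forall>y\<in>V. (x, y) \<in> E \<longleftrightarrow> (f x, f y) \<in> E'"
    using assms unfolding graph_iso_def by blast
  have "bij_betw (inv_into V f) V' V" using bij_betw_inv_into[OF f] .
  moreover have "\<forall>x\<in>V'. \<forall>y\<in>V'. (x, y) \<in> E' \<longleftrightarrow> (inv_into V f x, inv_into V f y) \<in> E"
    using edges bij_betw_inv_into_right[OF f] bij_betw_apply[OF calculation] by metis
  ultimately show ?thesis unfolding graph_iso_def by blast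
qed

lemma graph_iso_trans:
  assumes "graph_iso V E V' E'" "graph_iso V' E' V'' E''"
  shows "graph_iso V E V'' E''"
proof -
  obtain f where f: "bij_betw f V V'" and "\<forall>x\<in>V. \<forall>y\<in>V. (x, y) \<in> E \<longleftrightarrow> (f x, f y) \<in> E'"
    using assms(1) unfolding graph_iso_def by blast
  moreover obtain g where "bij_betw g V' V''" and "\<forall>x\<in>V'. \<forall>y\<in>V'. (x, y) \<in> E' \<longleftrightarrow> (g x, g y) \<in> E''"
    using assms(2) unfolding graph_iso_def by blast
  ultimately have "bij_betw (g \<circ> f) V V''" "\<forall>x\<in>V. \<forall>y\<in>V. (x, y) \<in> E \<longleftrightarrow> ((g \<circ> f) x, (g \<circ> f) y) \<in> E''"
    using bij_betw_trans bij_betw_apply[OF f] by auto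
  then show ?thesis unfolding graph_iso_def by blast
qed

lemma graph_iso_card: "graph_iso V E V' E' \<Longrightarrow> card V = card V'"
  unfolding graph_iso_def using bij_betw_same_card by blast

lemma graph_iso_edgeless:
  assumes "graph_iso V {} V' E'" "fgraph V' E'"
  shows "E' = {}"
proof -
  obtain f where f: "bij_betw f V V'" and "\<forall>x\<in>V. \<forall>y\<in>V. (f x, f y) \<notin> E'"
    using assms(1) unfolding graph_iso_def by blast
  then have "\<forall>x\<in>V'. \<forall>y\<in>V'. (x, y) \<notin> E'" using bij_betw_imp_surj_on[OF f] by blast
  then show ?thesis using fgraphD(2)[OF assms(2)] by blast
qed

section \<open>Cyclic orientations of 2-regular graphs\<close>

definition two_regular :: "'a set \<Rightarrow> ('a \<times> 'a) set \<Rightarrow> bool" where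
  "two_regular W R \<longleftrightarrow> fgraph W R \<and> (\<forall>u\<in>W. card (R `` {u}) = 2)"

(* v |-> {v, s v} maps a 2-regular graph isomorphically onto its line graph. *)
definition cyclic_orientation :: "'a set \<Rightarrow> ('a \<times> 'a) set \<Rightarrow> ('a \<Rightarrow> 'a) \<Rightarrow> bool" where
  "cyclic_orientation W R s \<longleftrightarrow> bij_betw s W W \<and> (\<forall>u\<in>W. (u, s u) \<in> R \<and> s (s u) \<noteq> u)"

lemma cyclic_orientation_nbr:
  assumes R: "two_regular W R" and s: "cyclic_orientation W R s" and u: "u \<in> W" and uw: "(u, w) \<in> R"
  shows "w = s u \<or> s w = u"
proof -
  have "u \<in> s ` W" using s u unfolding cyclic_orientation_def bij_betw_def by blast
  then obtain p where p: "p \<in> W" "s p = u" by blast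
  have "p \<in> R `` {u}" "s u \<in> R `` {u}" "p \<noteq> s u"
    using s p u fgraphD(3)[of W R] R unfolding cyclic_orientation_def two_regular_def by auto
  then have "R `` {u} = {p, s u}"
    using R u card_2_eq_doubleton unfolding two_regular_def by metis
  then show ?thesis using uw p(2) by auto
qed

lemma cyclic_orientation_doubleton_inj:
  assumes "cyclic_orientation W R s" "u \<in> W" "{u, s u} = {w, s w}"
  shows "u = w"
  using assms unfolding cyclic_orientation_def by (metis doubleton_eq_iff)

lemma cyclic_orientation_edge_iff:
  assumes R: "two_regular W R" and s: "cyclic_orientation W R s"
    and uw: "u \<in> W" "w \<in> W" "u \<noteq> w"
  shows "(u, w) \<in> R \<longleftrightarrow> {u, s u} \<inter> {w, s w} \<noteq> {}"
proof
  assume "(u, w) \<in> R"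
  then show "{u, s u} \<inter> {w, s w} \<noteq> {}" using cyclic_orientation_nbr[OF R s uw(1)] by blast
next
  assume "{u, s u} \<inter> {w, s w} \<noteq> {}"
  moreover have "s u \<noteq> s w" using s uw unfolding cyclic_orientation_def bij_betw_def by (meson inj_onD)
  ultimately have "w = s u \<or> u = s w" using uw(3) by blast
  then show "(u, w) \<in> R"
    using s uw R fgraphD(3)[of W R] unfolding cyclic_orientation_def two_regular_def by blast
qed

lemma two_regular_nbrs:
  assumes R: "two_regular W R" and v: "v \<in> W" and nbrs: "R `` {v} = {a, b}"
  shows "(v, a) \<in> R" "(v, b) \<in> R" "(a, v) \<in> R" "(b, v) \<in> R" "a \<in> W" "b \<in> W" "a \<noteq> v" "b \<noteq> v"
proof -
  have G: "fgraph W R" using R unfolding two_regular_def by blast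
  show va: "(v, a) \<in> R" and vb: "(v, b) \<in> R" using nbrs by auto
  show "(a, v) \<in> R" "(b, v) \<in> R" using fgraphD(3)[OF G] va vb by auto
  show "a \<in> W" "b \<in> W" "a \<noteq> v" "b \<noteq> v" using fgraphD(2,4)[OF G] va vb by auto
qed

lemma two_regular_remove_triangle:
  assumes R: "two_regular W R" and v: "v \<in> W"
    and nbrs: "R `` {v} = {a, b}" "a \<noteq> b" and ab: "(a, b) \<in> R"
  defines "W0 \<equiv> W - {v, a, b}"
  shows "two_regular W0 (R \<inter> W0 \<times> W0)"
proof -
  have G: "fgraph W R" and deg: "\<And>u. u \<in> W \<Longrightarrow> card (R `` {u}) = 2"
    using R unfolding two_regular_def by auto
  note v_nbrs = two_regular_nbrs[OF R v nbrs(1)]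
  have "R `` {a} = {v, b}" "R `` {b} = {v, a}"
    using card_2_eq_doubleton[OF deg] v_nbrs fgraphD(3)[OF G] ab nbrs(2) by auto
  then have "R `` {x} \<subseteq> W0" if "x \<in> W0" for x
    using that nbrs fgraphD(2,3)[OF G] unfolding W0_def by blast
  then have "(R \<inter> W0 \<times> W0) `` {x} = R `` {x}" if "x \<in> W0" for x
    using that by blast
  then show ?thesis using G deg unfolding two_regular_def fgraph_def sym_def W0_def by auto
qed

lemma cyclic_orientation_insert_triangle:
  assumes R: "two_regular W R" and v: "v \<in> W"
    and nbrs: "R `` {v} = {a, b}" "a \<noteq> b" and ab: "(a, b) \<in> R"
    and s: "cyclic_orientation (W - {v, a, b}) (R \<inter> (W - {v, a, b}) \<times> (W - {v, a, b})) s"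
  shows "cyclic_orientation W R (s(v := a, a := b, b := v))"
proof -
  let ?W0 = "W - {v, a, b}" and ?t = "s(v := a, a := b, b := v)"
  note v_nbrs = two_regular_nbrs[OF R v nbrs(1)]
  have t: "?t x = s x" "(x, s x) \<in> R" "s (s x) \<noteq> x" "s x \<in> ?W0" if "x \<in> ?W0" for x
    using s that unfolding cyclic_orientation_def bij_betw_def by auto
  have "bij_betw ?t ?W0 ?W0" using s bij_betw_cong[of ?W0 ?t s] t(1) unfolding cyclic_orientation_def by blast
  moreover have "bij_betw ?t {v, a, b} {v, a, b}" using nbrs(2) v_nbrs by (auto simp: bij_betw_def)
  ultimately have "bij_betw ?t (?W0 \<union> {v, a, b}) (?W0 \<union> {v, a, b})" by (rule bij_betw_combine) simp
  moreover have "?W0 \<union> {v, a, b} = W" using v v_nbrs by blast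
  ultimately have "bij_betw ?t W W" by simp
  moreover have "(u, ?t u) \<in> R \<and> ?t (?t u) \<noteq> u" if "u \<in> W" for u
  proof (cases "u \<in> ?W0")
    case True
    then show ?thesis using t[OF True] t(1)[of "s u"] by auto
  next
    case False
    then show ?thesis using that ab v_nbrs nbrs(2) by auto
  qed
  ultimately show ?thesis unfolding cyclic_orientation_def by blast
qed

lemma two_regular_contract_path:
  assumes R: "two_regular W R" and v: "v \<in> W"
    and nbrs: "R `` {v} = {a, b}" "a \<noteq> b" and ab: "(a, b) \<notin> R"
  defines "R0 \<equiv> R \<inter> (W - {v}) \<times> (W - {v}) \<union> {(a, b), (b, a)}"
  shows "two_regular (W - {v}) R0"
proof -
  have G: "fgraph W R" and deg: "\<And>u. u \<in> W \<Longrightarrow> card (R `` {u}) = 2"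
    using R unfolding two_regular_def by auto
  note v_nbrs = two_regular_nbrs[OF R v nbrs(1)] and sym = fgraphD(3)[OF G]
  have nbrs0: "R0 `` {x} = (R `` {x} - {v}) \<union> (if x = a then {b} else if x = b then {a} else {})"
    if "x \<in> W - {v}" for x
    using that fgraphD(2)[OF G] nbrs(2) unfolding R0_def by auto
  have "card (R0 `` {x}) = 2" if x: "x \<in> W - {v}" for x
  proof (cases "x = a \<or> x = b")
    case True
    then have "v \<in> R `` {x}" "x \<in> W" using v_nbrs by auto
    then have "card (R `` {x} - {v}) = 1" using deg by (simp add: card_Diff_singleton_if)
    moreover have "finite (R `` {x})" by (rule card_ge_0_finite) (simp add: deg \<open>x \<in> W\<close>)
    moreover have "R0 `` {x} = insert (if x = a then b else a) (R `` {x} - {v})"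
      "(if x = a then b else a) \<notin> R `` {x} - {v}"
      using nbrs0[OF x] True ab sym nbrs(2) by auto
    ultimately show ?thesis by simp
  next
    case False
    then have "v \<notin> R `` {x}" using sym nbrs(1) by blast
    then show ?thesis using nbrs0[OF x] False deg x by auto
  qed
  then show ?thesis
    using G v_nbrs nbrs(2) unfolding two_regular_def fgraph_def sym_def R0_def by auto
qed

lemma cyclic_orientation_expand_path:
  assumes R: "two_regular W R" and v: "v \<in> W"
    and nbrs: "R `` {v} = {a, b}" "a \<noteq> b"
    and s: "cyclic_orientation (W - {v}) (R \<inter> (W - {v}) \<times> (W - {v}) \<union> {(a, b), (b, a)}) s"
    and sa: "s a = b"
  shows "cyclic_orientation W R (s(a := v, v := b))"
proof -
  let ?t = "s(a := v, v := b)"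
  note v_nbrs = two_regular_nbrs[OF R v nbrs(1)]
  have bij_s: "bij_betw s (W - {v}) (W - {v})" using s unfolding cyclic_orientation_def by blast
  have s_edge: "(x, s x) \<in> R \<or> (x, s x) \<in> {(a, b), (b, a)}" "s (s x) \<noteq> x" "s x \<in> W - {v}"
    if "x \<in> W - {v}" for x
    using s that bij_betw_apply[OF bij_s] unfolding cyclic_orientation_def by auto
  have s_not_b: "s x \<noteq> b" if "x \<in> W - {v} - {a}" for x
    using inj_onD[OF bij_betw_imp_inj_on[OF bij_s], of x a] that sa v_nbrs by auto
  have s_R: "(x, s x) \<in> R" if "x \<in> W - {v} - {a}" for x
    using s_edge[of x] s_not_b[OF that] that sa s_edge(2)[of a] v_nbrs by auto
  have "bij_betw s (W - {v} - {a}) (W - {v} - {b})"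
    by (rule bij_betw_DiffI[OF bij_s]) (use sa v_nbrs in auto)
  then have "bij_betw ?t (W - {v} - {a}) (W - {v} - {b})"
    by (rule bij_betw_cong[THEN iffD1, rotated]) auto
  moreover have "bij_betw ?t {a, v} {v, b}" using nbrs(2) v_nbrs by (auto simp: bij_betw_def)
  ultimately have "bij_betw ?t ((W - {v} - {a}) \<union> {a, v}) ((W - {v} - {b}) \<union> {v, b})"
    by (rule bij_betw_combine) blast
  moreover have "(W - {v} - {a}) \<union> {a, v} = W" "(W - {v} - {b}) \<union> {v, b} = W" using v v_nbrs by blast+
  ultimately have "bij_betw ?t W W" by simp
  moreover have "(u, ?t u) \<in> R \<and> ?t (?t u) \<noteq> u" if u: "u \<in> W" for u
  proof -
    consider "u = a" | "u = v" | "u \<in> W - {v} - {a}" using u by blast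
    then show ?thesis
    proof cases
      case 1
      then show ?thesis using v_nbrs nbrs(2) by simp
    next
      case 2
      then show ?thesis using s_edge(3)[of b] v_nbrs nbrs(2) by auto
    next
      case 3
      then show ?thesis using s_R[OF 3] s_edge[of u] by auto
    qed
  qed
  ultimately show ?thesis unfolding cyclic_orientation_def by blast
qed

lemma cyclic_orientation_of_contracted_path:
  assumes R: "two_regular W R" and v: "v \<in> W"
    and nbrs: "R `` {v} = {a, b}" "a \<noteq> b" and ab: "(a, b) \<notin> R"
    and s: "cyclic_orientation (W - {v}) (R \<inter> (W - {v}) \<times> (W - {v}) \<union> {(a, b), (b, a)}) s"
  shows "\<exists>t. cyclic_orientation W R t"
proof -
  note reg0 = two_regular_contract_path[OF R v nbrs ab]
  have "a \<in> W - {v}" using two_regular_nbrs[OF R v nbrs(1)] by blast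
  then have "s a = b \<or> s b = a" using cyclic_orientation_nbr[OF reg0 s] by blast
  then show ?thesis
  proof
    assume "s a = b"
    then show ?thesis using cyclic_orientation_expand_path[OF R v nbrs s] by blast
  next
    assume "s b = a"
    moreover have "R `` {v} = {b, a}" using nbrs(1) by blast
    moreover have "R \<inter> (W - {v}) \<times> (W - {v}) \<union> {(a, b), (b, a)} = R \<inter> (W - {v}) \<times> (W - {v}) \<union> {(b, a), (a, b)}"
      by blast
    ultimately show ?thesis using cyclic_orientation_expand_path[OF R v _ nbrs(2)[symmetric] _] s by metis
  qed
qed

lemma two_regular_cyclic_orientation:
  assumes "two_regular W R"
  shows "\<exists>s. cyclic_orientation W R s"
  using assms
proof (induction "card W" arbitrary: W R rule: less_induct)
  case less
  show ?case
  proof (cases "W = {}")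
    case True
    then show ?thesis unfolding cyclic_orientation_def by (intro exI[of _ id]) simp
  next
    case False
    then obtain v where v: "v \<in> W" by blast
    have fin: "finite W" using less.prems fgraphD(1) unfolding two_regular_def by blast
    obtain a b where ab: "R `` {v} = {a, b}" "a \<noteq> b"
      using less.prems v unfolding two_regular_def card_2_iff by blast
    show ?thesis
    proof (cases "(a, b) \<in> R")
      case True
      let ?W0 = "W - {v, a, b}"
      have "card ?W0 < card W" using fin v by (intro psubset_card_mono) auto
      then obtain s where "cyclic_orientation ?W0 (R \<inter> ?W0 \<times> ?W0) s"
        using less.hyps two_regular_remove_triangle[OF less.prems v ab True] by blast
      then show ?thesis using cyclic_orientation_insert_triangle[OF less.prems v ab True] by blast
    next
      case False
      let ?R0 = "R \<inter> (W - {v}) \<times> (W - {v}) \<union> {(a, b), (b, a)}"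
      have "card (W - {v}) < card W" using fin v by (intro psubset_card_mono) auto
      then obtain s where "cyclic_orientation (W - {v}) ?R0 s"
        using less.hyps two_regular_contract_path[OF less.prems v ab False] by blast
      then show ?thesis by (rule cyclic_orientation_of_contracted_path[OF less.prems v ab False])
    qed
  qed
qed

section \<open>Token addition and removal on independent sets\<close>

definition ar_adj :: "'a set \<Rightarrow> 'a set \<Rightarrow> bool" where
  "ar_adj I J \<longleftrightarrow> (\<exists>x. (I - J) \<union> (J - I) = {x})"

lemma ar_adj_iff: "ar_adj I J \<longleftrightarrow> (\<exists>x. x \<notin> I \<and> J = insert x I) \<or> (\<exists>x. x \<notin> J \<and> I = insert x J)"
proof
  assume "ar_adj I J"
  then obtain x where x: "(I - J) \<union> (J - I) = {x}" unfolding ar_adj_def by blast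
  have xe: "\<And>y. (y \<in> I \<and> y \<notin> J) \<or> (y \<in> J \<and> y \<notin> I) \<longleftrightarrow> y = x"
    using x by (auto simp: set_eq_iff)
  show "(\<exists>x. x \<notin> I \<and> J = insert x I) \<or> (\<exists>x. x \<notin> J \<and> I = insert x J)"
  proof (cases "x \<in> I")
    case True
    then have "x \<notin> J" using xe by blast
    have "I = insert x J"
    proof (rule set_eqI)
      fix y show "y \<in> I \<longleftrightarrow> y \<in> insert x J" using xe[of y] True by blast
    qed
    then show ?thesis using \<open>x \<notin> J\<close> by blast
  next
    case False
    then have "x \<in> J" using xe by blast
    have "J = insert x I"
    proof (rule set_eqI)
      fix y show "y \<in> J \<longleftrightarrow> y \<in> insert x I" using xe[of y] False by blast
    qed
    then show ?thesis using False by blast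
  qed
next
  assume "(\<exists>x. x \<notin> I \<and> J = insert x I) \<or> (\<exists>x. x \<notin> J \<and> I = insert x J)"
  then show "ar_adj I J" unfolding ar_adj_def by blast
qed

lemma ar_adj_commute: "ar_adj I J \<longleftrightarrow> ar_adj J I"
  unfolding ar_adj_def by (simp add: Un_commute)

lemma ar_adj_insert: "x \<notin> I \<Longrightarrow> ar_adj I (insert x I)" "x \<notin> I \<Longrightarrow> ar_adj (insert x I) I"
  unfolding ar_adj_iff by blast+

lemma ar_adj_card_2_singleton:
  assumes "card X = 2" "z \<in> X"
  shows "ar_adj X {z}"
proof -
  obtain a b where "X = {a, b}" "a \<noteq> b" using assms(1) unfolding card_2_iff by blast
  then have "X = insert (if z = a then b else a) {z}" "(if z = a then b else a) \<notin> {z}"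
    using assms(2) by auto
  then show ?thesis using ar_adj_insert(2) by metis
qed

lemma ar_adj_card:
  assumes "ar_adj I J" "finite I" "finite J"
  shows "card J = Suc (card I) \<or> card I = Suc (card J)"
  using assms unfolding ar_adj_iff by auto

lemma ar_adj_card_less:
  assumes "ar_adj I J" "finite J" "card I < card J"
  obtains x where "x \<notin> I" "J = insert x I"
  using assms unfolding ar_adj_iff by fastforce

lemma ar_adj_singleton_nonempty:
  assumes "ar_adj {v} N" "N \<noteq> {}"
  obtains w where "w \<noteq> v" "N = {v, w}"
proof -
  from assms(1) consider w where "w \<notin> {v}" "N = insert w {v}" | w where "w \<notin> N" "{v} = insert w N"
    unfolding ar_adj_iff by blast
  then show ?thesis
  proof cases
    case (1 w)
    then show ?thesis using that by (simp add: insert_commute)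
  next
    case (2 w)
    then have "w = v" "N \<subseteq> {v}" by blast+
    then show ?thesis using 2(1) assms(2) by blast
  qed
qed

lemma ar_adj_common_nbr:
  assumes fin: "finite I" "finite J" and IJ: "card I = card J" "I \<noteq> J"
    and adj: "ar_adj I M" "ar_adj J M"
  shows "M = I \<union> J \<and> card M = Suc (card I) \<or> M = I \<inter> J \<and> card I = Suc (card M)"
proof -
  have not_sub: "\<not> J \<subseteq> I" "\<not> I \<subseteq> J" using IJ fin card_subset_eq by metis+
  from adj consider
      x y where "x \<notin> I" "M = insert x I" "y \<notin> J" "M = insert y J"
    | x y where "x \<notin> M" "I = insert x M" "y \<notin> M" "J = insert y M"
    | x y where "x \<notin> I" "M = insert x I" "y \<notin> M" "J = insert y M"
    | x y where "x \<notin> M" "I = insert x M" "y \<notin> J" "M = insert y J"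
    unfolding ar_adj_iff by blast
  then show ?thesis
  proof cases
    case (1 x y)
    then have "J \<subseteq> insert x I" by (metis subset_insertI)
    then have "x \<in> J" using not_sub(1) by (meson subset_insert)
    then have "M = I \<union> J" using 1 by blast
    moreover have "card M = Suc (card I)" using 1 fin by simp
    ultimately show ?thesis by blast
  next
    case (2 x y)
    then have "insert x M \<subseteq> J \<Longrightarrow> False" using not_sub(2) by simp
    then have "x \<notin> J" using 2 by blast
    then have "M = I \<inter> J" using 2 by blast
    moreover have "card I = Suc (card M)" using 2 fin by simp
    ultimately show ?thesis by blast
  next
    case (3 x y)
    then have "card J = Suc (Suc (card I))" using fin by simp
    then show ?thesis using IJ by simp
  next
    case (4 x y)
    then have "card I = Suc (Suc (card J))" using fin by simp
    then show ?thesis using IJ by simp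
  qed
qed

lemma ar_adj_common_nbr_card:
  assumes "finite I" "finite J" "finite M" "ar_adj I M" "ar_adj J M"
  shows "card I \<noteq> Suc (card J)"
  using ar_adj_card[OF assms(4,1,3)] ar_adj_card[OF assms(5,2,3)] by auto

definition indep_sets :: "'a set \<Rightarrow> ('a \<times> 'a) set \<Rightarrow> 'a set set" where
  "indep_sets V E = {I. indep V E I}"

definition nonempty_indep_sets :: "'a set \<Rightarrow> ('a \<times> 'a) set \<Rightarrow> 'a set set" where
  "nonempty_indep_sets V E = indep_sets V E - {{}}"

lemma finite_indep_set: "fgraph V E \<Longrightarrow> I \<in> indep_sets V E \<Longrightarrow> finite I"
  unfolding indep_sets_def indep_def using fgraphD(1) finite_subset by blast

lemma nonempty_indep_sets_subset:
  "I \<in> nonempty_indep_sets V E \<Longrightarrow> J \<subseteq> I \<Longrightarrow> J \<noteq> {} \<Longrightarrow> J \<in> nonempty_indep_sets V E"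
  unfolding nonempty_indep_sets_def indep_sets_def indep_def by blast

lemma nonempty_indep_sets_singleton:
  "I \<in> nonempty_indep_sets V E \<Longrightarrow> a \<in> I \<Longrightarrow> {a} \<in> nonempty_indep_sets V E"
  by (rule nonempty_indep_sets_subset) auto

lemma singleton_in_nonempty_indep_sets:
  assumes "fgraph V E" "v \<in> V"
  shows "{v} \<in> nonempty_indep_sets V E"
  using assms fgraphD(4)[OF assms(1)] unfolding nonempty_indep_sets_def indep_sets_def indep_def by auto

lemma doubleton_in_nonempty_indep_sets_iff:
  assumes "fgraph V E"
  shows "{u, v} \<in> nonempty_indep_sets V E \<longleftrightarrow> u \<in> V \<and> v \<in> V \<and> (u, v) \<notin> E"
  using fgraphD(3,4)[OF assms] unfolding nonempty_indep_sets_def indep_sets_def indep_def by auto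

lemma nonempty_indep_setsI:
  assumes G: "fgraph V E" and I: "I \<subseteq> V" "I \<noteq> {}"
    and pairs: "\<And>x y. x \<in> I \<Longrightarrow> y \<in> I \<Longrightarrow> x \<noteq> y \<Longrightarrow> {x, y} \<in> nonempty_indep_sets V E"
  shows "I \<in> nonempty_indep_sets V E"
  using I pairs fgraphD(4)[OF G] doubleton_in_nonempty_indep_sets_iff[OF G]
  unfolding nonempty_indep_sets_def indep_sets_def indep_def by blast

lemma singletons_common_nbr_iff:
  assumes G: "fgraph V E" and uv: "u \<in> V" "v \<in> V" "u \<noteq> v"
  shows "(\<exists>M\<in>nonempty_indep_sets V E. ar_adj {u} M \<and> ar_adj {v} M) \<longleftrightarrow> (u, v) \<notin> E"
proof
  assume "\<exists>M\<in>nonempty_indep_sets V E. ar_adj {u} M \<and> ar_adj {v} M"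
  then obtain M where M: "M \<in> nonempty_indep_sets V E" "ar_adj {u} M" "ar_adj {v} M" by blast
  then have "M = {u, v}"
    using ar_adj_common_nbr[of "{u}" "{v}" M] uv(3) unfolding nonempty_indep_sets_def by auto
  then show "(u, v) \<notin> E" using M(1) doubleton_in_nonempty_indep_sets_iff[OF G] by blast
next
  assume "(u, v) \<notin> E"
  then have "{u, v} \<in> nonempty_indep_sets V E" using doubleton_in_nonempty_indep_sets_iff[OF G] uv by blast
  moreover have "ar_adj {u} {u, v}" "ar_adj {v} {u, v}"
    using ar_adj_insert(1)[of v "{u}"] ar_adj_insert(1)[of u "{v}"] uv(3) by (auto simp: insert_commute)
  ultimately show "\<exists>M\<in>nonempty_indep_sets V E. ar_adj {u} M \<and> ar_adj {v} M" by blast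
qed

lemma doubletons_common_nbr_iff:
  assumes P: "P \<in> nonempty_indep_sets V E" "card P = 2"
    and Q: "Q \<in> nonempty_indep_sets V E" "card Q = 2" and PQ: "P \<noteq> Q"
  shows "(\<exists>M\<in>nonempty_indep_sets V E. ar_adj P M \<and> ar_adj Q M) \<longleftrightarrow> P \<inter> Q \<noteq> {}"
proof
  assume "\<exists>M\<in>nonempty_indep_sets V E. ar_adj P M \<and> ar_adj Q M"
  then obtain M where M: "M \<in> nonempty_indep_sets V E" "ar_adj P M" "ar_adj Q M" by blast
  have fin: "finite P" "finite Q" using P Q by (auto intro: card_ge_0_finite)
  from ar_adj_common_nbr[OF fin _ PQ M(2,3)] P(2) Q(2)
  consider "M = P \<union> Q" "card M = 3" | "M = P \<inter> Q" by auto
  then show "P \<inter> Q \<noteq> {}"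
  proof cases
    case 1
    then show ?thesis using card_Un_disjoint[OF fin] P(2) Q(2) by auto
  next
    case 2
    then show ?thesis using M(1) unfolding nonempty_indep_sets_def by blast
  qed
next
  assume "P \<inter> Q \<noteq> {}"
  then obtain z where z: "z \<in> P" "z \<in> Q" by blast
  have "{z} \<in> nonempty_indep_sets V E"
    by (rule nonempty_indep_sets_subset[OF P(1)]) (use z in auto)
  then show "\<exists>M\<in>nonempty_indep_sets V E. ar_adj P M \<and> ar_adj Q M"
    using ar_adj_card_2_singleton[OF P(2) z(1)] ar_adj_card_2_singleton[OF Q(2) z(2)] by blast
qed

lemma second_common_nbr_between:
  assumes B: "B \<in> nonempty_indep_sets V E"
    and adj: "ar_adj A M" "ar_adj M B" and card: "card A < card M" "card M < card B"
  obtains M2 where "M2 \<in> nonempty_indep_sets V E" "M2 \<noteq> M" "ar_adj A M2" "ar_adj M2 B"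
proof -
  have "finite B" using card(2) by (intro card_ge_0_finite) simp
  then obtain b where b: "b \<notin> M" "B = insert b M" using ar_adj_card_less[OF adj(2)] card(2) by blast
  then have "finite M" using \<open>finite B\<close> by simp
  then obtain a where a: "a \<notin> A" "M = insert a A" using ar_adj_card_less[OF adj(1)] card(1) by blast
  have "b \<notin> A" "a \<notin> insert b A" using a b by auto
  then have "ar_adj A (insert b A)" "ar_adj (insert b A) B"
    using ar_adj_insert a b by (metis insert_commute)+
  moreover have "insert b A \<in> nonempty_indep_sets V E"
    by (rule nonempty_indep_sets_subset[OF B]) (use a b in auto)
  moreover have "insert b A \<noteq> M" using b by blast
  ultimately show ?thesis using that by blast
qed

lemma second_common_nbr_below:
  assumes B: "B \<in> nonempty_indep_sets V E" "3 \<le> card B"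
    and Y: "Y1 \<noteq> Y2" "ar_adj Y1 B" "ar_adj Y2 B" "card Y1 < card B" "card Y2 < card B"
  obtains M where "M \<in> nonempty_indep_sets V E" "M \<noteq> B" "ar_adj Y1 M" "ar_adj Y2 M"
proof -
  have fin: "finite B" using B(2) by (intro card_ge_0_finite) simp
  obtain a where a: "a \<notin> Y1" "B = insert a Y1" using ar_adj_card_less[OF Y(2) fin Y(4)] by blast
  obtain b where b: "b \<notin> Y2" "B = insert b Y2" using ar_adj_card_less[OF Y(3) fin Y(5)] by blast
  have "a \<noteq> b" using a b Y(1) by (metis Diff_insert_absorb)
  define M where "M = B - {a, b}"
  have "Y1 = insert b M" "b \<notin> M" "Y2 = insert a M" "a \<notin> M"
    using a b \<open>a \<noteq> b\<close> unfolding M_def by auto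
  then have "ar_adj Y1 M" "ar_adj Y2 M" using ar_adj_insert(2) by metis+
  moreover have "finite M" using fin unfolding M_def by simp
  then have "card B = Suc (Suc (card M))" using a \<open>Y1 = insert b M\<close> \<open>b \<notin> M\<close> by simp
  then have "M \<noteq> {}" using B(2) by auto
  then have "M \<in> nonempty_indep_sets V E" by (rule nonempty_indep_sets_subset[OF B(1), rotated]) (simp add: M_def)
  moreover have "M \<noteq> B" using a unfolding M_def by blast
  ultimately show ?thesis using that by blast
qed

section \<open>Isomorphisms of token addition and removal graphs\<close>

locale ar_iso =
  fixes X :: "'a set set" and X' :: "'b set set" and f :: "'a set \<Rightarrow> 'b set"
  assumes bij: "bij_betw f X X'"
    and ar_adj_image_iff: "I \<in> X \<Longrightarrow> J \<in> X \<Longrightarrow> ar_adj (f I) (f J) \<longleftrightarrow> ar_adj I J"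
begin

lemma image_in: "I \<in> X \<Longrightarrow> f I \<in> X'"
  using bij_betw_apply[OF bij] .

lemma image_eq_iff: "I \<in> X \<Longrightarrow> J \<in> X \<Longrightarrow> f I = f J \<longleftrightarrow> I = J"
  using bij_betw_imp_inj_on[OF bij] by (auto dest: inj_onD)

lemma obtain_preimage:
  assumes "J \<in> X'"
  obtains I where "I \<in> X" "f I = J"
  using assms bij_betw_imp_surj_on[OF bij] by blast

lemma inv_ar_iso: "ar_iso X' X (inv_into X f)"
proof
  show "bij_betw (inv_into X f) X' X" by (rule bij_betw_inv_into[OF bij])
  fix I J assume "I \<in> X'" "J \<in> X'"
  then show "ar_adj (inv_into X f I) (inv_into X f J) \<longleftrightarrow> ar_adj I J"
    using ar_adj_image_iff bij_betw_inv_into_right[OF bij] bij_betw_apply[OF bij_betw_inv_into[OF bij]]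
    by metis
qed

lemma common_nbr_image_iff:
  assumes "A \<in> X" "B \<in> X"
  shows "(\<exists>M'\<in>X'. ar_adj (f A) M' \<and> ar_adj (f B) M') \<longleftrightarrow> (\<exists>M\<in>X. ar_adj A M \<and> ar_adj B M)"
  using assms ar_adj_image_iff image_in obtain_preimage by metis

lemma nbrs_image: "A \<in> X \<Longrightarrow> f ` {J \<in> X. ar_adj A J} = {J' \<in> X'. ar_adj (f A) J'}"
  using ar_adj_image_iff image_in obtain_preimage by (auto simp: image_iff) metis

lemma card_nbrs_image: "A \<in> X \<Longrightarrow> card {J' \<in> X'. ar_adj (f A) J'} = card {J \<in> X. ar_adj A J}"
  using nbrs_image card_image bij_betw_imp_inj_on[OF bij] by (metis (no_types, lifting) inj_on_subset mem_Collect_eq subsetI)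

end

lemma ar_iso_comp: "ar_iso X X' f \<Longrightarrow> ar_iso X' X'' g \<Longrightarrow> ar_iso X X'' (g \<circ> f)"
  unfolding ar_iso_def using bij_betw_trans bij_betw_apply by fastforce

lemma ar_iso_remove:
  assumes "ar_iso X X' f" "A \<in> X"
  shows "ar_iso (X - {A}) (X' - {f A}) f"
proof -
  interpret ar_iso X X' f by fact
  have "bij_betw f (X - {A}) (X' - {f A})"
    using bij_betw_DiffI[OF bij, of "{A}" "{f A}"] assms(2) image_in by simp
  then show ?thesis using ar_adj_image_iff by unfold_locales auto
qed

section \<open>Reconstruction from the nonempty independent sets\<close>

locale ar_graph_iso = ar_iso "nonempty_indep_sets V E" "nonempty_indep_sets V' E'" f
  for V :: "'a set" and E :: "('a \<times> 'a) set" and V' :: "'b set" and E' :: "('b \<times> 'b) set"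
    and f :: "'a set \<Rightarrow> 'b set" +
  assumes G: "fgraph V E" and G': "fgraph V' E'"
begin

lemma inv_ar_graph_iso: "ar_graph_iso V' E' V E (inv_into (nonempty_indep_sets V E) f)"
  using inv_ar_iso G G' by (simp add: ar_graph_iso_def ar_graph_iso_axioms_def)

lemma finite_image: "I \<in> nonempty_indep_sets V E \<Longrightarrow> finite (f I)"
  using finite_indep_set[OF G'] image_in unfolding nonempty_indep_sets_def by blast

lemma card_image_pos: "I \<in> nonempty_indep_sets V E \<Longrightarrow> 0 < card (f I)"
  using finite_image image_in unfolding nonempty_indep_sets_def by (simp add: card_gt_0_iff)

lemma doubleton_image_unique_common_nbr:
  assumes uv: "u \<noteq> v" "{u, v} \<in> nonempty_indep_sets V E"
    and M': "M' \<in> nonempty_indep_sets V' E'" "ar_adj (f {u}) M'" "ar_adj (f {v}) M'"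
  shows "M' = f {u, v}"
proof -
  obtain M where M: "M \<in> nonempty_indep_sets V E" "f M = M'" using obtain_preimage[OF M'(1)] .
  have "{u} \<in> nonempty_indep_sets V E" "{v} \<in> nonempty_indep_sets V E"
    using nonempty_indep_sets_singleton[OF uv(2)] by auto
  then have "ar_adj {u} M" "ar_adj {v} M" using M M'(2,3) ar_adj_image_iff by auto
  then have "M = {u, v}"
    using ar_adj_common_nbr[of "{u}" "{v}" M] uv(1) M(1) unfolding nonempty_indep_sets_def by auto
  then show ?thesis using M(2) by simp
qed

lemma card_image_singleton_eq:
  assumes uv: "u \<noteq> v" "{u, v} \<in> nonempty_indep_sets V E"
  shows "card (f {u}) = card (f {v})"
proof (rule ccontr)
  assume ne: "card (f {u}) \<noteq> card (f {v})"
  have P: "{u} \<in> nonempty_indep_sets V E" "{v} \<in> nonempty_indep_sets V E"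
    using nonempty_indep_sets_singleton[OF uv(2)] by auto
  have "ar_adj {u} {u, v}" "ar_adj {v} {u, v}"
    using ar_adj_insert(1)[of v "{u}"] ar_adj_insert(1)[of u "{v}"] uv(1) by (auto simp: insert_commute)
  then have adj: "ar_adj (f {u}) (f {u, v})" "ar_adj (f {v}) (f {u, v})"
    using ar_adj_image_iff P uv(2) by auto
  have "card (f {u}) < card (f {u, v}) \<and> card (f {u, v}) < card (f {v})
      \<or> card (f {v}) < card (f {u, v}) \<and> card (f {u, v}) < card (f {u})"
    using ar_adj_card[OF adj(1)] ar_adj_card[OF adj(2)] ne finite_image P uv(2) by fastforce
  then obtain M2 where "M2 \<in> nonempty_indep_sets V' E'" "M2 \<noteq> f {u, v}"
    "ar_adj (f {u}) M2" "ar_adj (f {v}) M2"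
    using second_common_nbr_between[OF image_in[OF P(2)] adj(1) ar_adj_commute[THEN iffD1, OF adj(2)]]
      second_common_nbr_between[OF image_in[OF P(1)] adj(2) ar_adj_commute[THEN iffD1, OF adj(1)]]
    by (metis ar_adj_commute)
  then show False using doubleton_image_unique_common_nbr[OF uv] by blast
qed

lemma card_image_doubleton_not_up:
  assumes uv: "u \<noteq> v" "{u, v} \<in> nonempty_indep_sets V E"
    and c: "2 \<le> card (f {u})" "card (f {v}) = card (f {u})"
  shows "card (f {u, v}) \<noteq> Suc (card (f {u}))"
proof
  assume up: "card (f {u, v}) = Suc (card (f {u}))"
  have P: "{u} \<in> nonempty_indep_sets V E" "{v} \<in> nonempty_indep_sets V E"
    using nonempty_indep_sets_singleton[OF uv(2)] by auto
  have "ar_adj {u} {u, v}" "ar_adj {v} {u, v}"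
    using ar_adj_insert(1)[of v "{u}"] ar_adj_insert(1)[of u "{v}"] uv(1) by (auto simp: insert_commute)
  then have adj: "ar_adj (f {u}) (f {u, v})" "ar_adj (f {v}) (f {u, v})"
    using ar_adj_image_iff P uv(2) by auto
  have "f {u} \<noteq> f {v}" using image_eq_iff[OF P] uv(1) by simp
  moreover have "3 \<le> card (f {u, v})" using up c by simp
  ultimately obtain M' where "M' \<in> nonempty_indep_sets V' E'" "M' \<noteq> f {u, v}"
    "ar_adj (f {u}) M'" "ar_adj (f {v}) M'"
    using second_common_nbr_below[OF image_in[OF uv(2)] _ _ adj] up c by auto
  then show False using doubleton_image_unique_common_nbr[OF uv] by blast
qed

(* f (Y - {a}) and f (Y - {b}) have the same size, so f Y is their union or their intersection.
   The union is impossible: the two sets would have a second common neighbour above them (the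
   image of Y - {a, b}) or below them (when |Y| = 2), whose preimage contradicts the uniqueness of
   common neighbours in G. *)
lemma card_image_level_step:
  assumes c: "2 \<le> c" and Y: "Y \<in> nonempty_indep_sets V E" "\<forall>z\<in>Y. card (f {z}) = c"
    and ab: "a \<in> Y" "b \<in> Y" "a \<noteq> b"
    and Ya: "card (f (Y - {a})) + card Y = c + 2" and Yb: "card (f (Y - {b})) + card Y = c + 2"
    and Yab_level: "3 \<le> card Y \<Longrightarrow> card (f (Y - {a, b})) + card Y = c + 3"
  shows "card (f Y) + card Y = c + 1"
proof -
  have finY: "finite Y" using Y(1) finite_indep_set[OF G] unfolding nonempty_indep_sets_def by blast
  have PY: "Y - {a} \<in> nonempty_indep_sets V E" "Y - {b} \<in> nonempty_indep_sets V E"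
    using ab by (auto intro: nonempty_indep_sets_subset[OF Y(1)])
  have "ar_adj (Y - {a}) Y" "ar_adj (Y - {b}) Y" using ar_adj_insert(1) ab by (metis Diff_iff insert_Diff singletonI)+
  then have adj: "ar_adj (f (Y - {a})) (f Y)" "ar_adj (f (Y - {b})) (f Y)"
    using ar_adj_image_iff PY Y(1) by auto
  have ne: "f (Y - {a}) \<noteq> f (Y - {b})" using image_eq_iff[OF PY] ab by blast
  from ar_adj_common_nbr[OF finite_image[OF PY(1)] finite_image[OF PY(2)] _ ne adj] Ya Yb
  consider "f Y = f (Y - {a}) \<union> f (Y - {b})" "card (f Y) = Suc (card (f (Y - {a})))"
    | "card (f (Y - {a})) = Suc (card (f Y))" by force
  then show ?thesis
  proof cases
    case up: 1
    have "{a, b} \<subseteq> Y" using ab by blast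
    then have "card {a, b} \<le> card Y" by (rule card_mono[OF finY])
    then have "2 \<le> card Y" using ab(3) by simp
    then consider "card Y = 2" | "3 \<le> card Y" by linarith
    then show ?thesis
    proof cases
      case 1
      then have "Y = {b, a}" using ab by (auto simp: card_2_iff)
      moreover have "card (f {a}) = c" "card (f {b}) = c" using Y(2) ab by auto
      ultimately show ?thesis
        using card_image_doubleton_not_up[of b a] up Ya 1 ab(3) Y(1) c by (simp add: insert_Diff_if)
    next
      case 2
      have "card (Y - {a, b}) = card Y - 2" using \<open>{a, b} \<subseteq> Y\<close> finY ab(3) by (simp add: card_Diff_subset)
      then have "0 < card (Y - {a, b})" using 2 by simp
      then have "Y - {a, b} \<noteq> {}" by (metis card.empty less_irrefl)
      then have PYab: "Y - {a, b} \<in> nonempty_indep_sets V E"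
        by (rule nonempty_indep_sets_subset[OF Y(1), rotated]) auto
      have "Y - {a} = insert b (Y - {a, b})" "Y - {b} = insert a (Y - {a, b})" "a \<notin> Y - {a, b}" "b \<notin> Y - {a, b}"
        using ab by auto
      then have "ar_adj (Y - {a}) (Y - {a, b})" "ar_adj (Y - {b}) (Y - {a, b})"
        using ar_adj_insert(2) by metis+
      then have "ar_adj (f (Y - {a})) (f (Y - {a, b}))" "ar_adj (f (Y - {b})) (f (Y - {a, b}))"
        using ar_adj_image_iff PY PYab by auto
      from ar_adj_common_nbr[OF finite_image[OF PY(1)] finite_image[OF PY(2)] _ ne this]
      have "f (Y - {a, b}) = f (Y - {a}) \<union> f (Y - {b})" using Ya Yb Yab_level[OF 2] by auto
      then have "Y - {a, b} = Y" using up image_eq_iff[OF PYab Y(1)] by simp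
      then show ?thesis using ab(1) by blast
    qed
  next
    case 2
    then show ?thesis using Ya by simp
  qed
qed

lemma card_image_level:
  assumes "2 \<le> c" "Y \<in> nonempty_indep_sets V E" "\<forall>z\<in>Y. card (f {z}) = c"
  shows "card (f Y) + card Y = c + 1"
  using assms(2,3)
proof (induction "card Y" arbitrary: Y rule: less_induct)
  case less
  note Y = less.prems
  have finY: "finite Y" using Y(1) finite_indep_set[OF G] unfolding nonempty_indep_sets_def by blast
  have IH: "card (f Z) + card Z = c + 1" if "Z \<subseteq> Y" "Z \<noteq> {}" "card Z < card Y" for Z
    using less.hyps[OF that(3)] nonempty_indep_sets_subset[OF Y(1) that(1,2)] Y(2) that(1) by blast
  obtain a where a: "a \<in> Y" using Y(1) unfolding nonempty_indep_sets_def by blast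
  show ?case
  proof (cases "Y = {a}")
    case True
    then show ?thesis using Y(2) by simp
  next
    case False
    then obtain b where b: "b \<in> Y" "b \<noteq> a" using a by blast
    have level1: "card (f (Y - {z})) + card Y = c + 2" if z: "z \<in> Y" for z
    proof -
      have "Y - {z} \<noteq> {}" using a b by blast
      moreover have "card (Y - {z}) < card Y" by (rule card_Diff1_less[OF finY z])
      ultimately have "card (f (Y - {z})) + card (Y - {z}) = c + 1" by (rule IH[OF Diff_subset])
      moreover have "card Y = Suc (card (Y - {z}))" using card_Suc_Diff1[OF finY z] by simp
      ultimately show ?thesis by simp
    qed
    have level2: "card (f (Y - {a, b})) + card Y = c + 3" if "3 \<le> card Y"
    proof -
      have "card (Y - {a, b}) = card Y - 2" using a b finY by (simp add: card_Diff_subset)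
      then have "0 < card (Y - {a, b})" "card (Y - {a, b}) < card Y" using that by simp_all
      then have "Y - {a, b} \<noteq> {}" by (metis card.empty less_irrefl)
      then have "card (f (Y - {a, b})) + card (Y - {a, b}) = c + 1"
        by (rule IH[OF Diff_subset]) fact
      then show ?thesis using \<open>card (Y - {a, b}) = card Y - 2\<close> that by simp
    qed
    show ?thesis
      using card_image_level_step[OF assms(1) Y a b(1) b(2)[symmetric] level1[OF a] level1[OF b(1)] level2] .
  qed
qed

lemma doubleton_preimage_minus_point:
  assumes v: "v \<in> V" and c: "2 \<le> card (f {v})" and x: "x \<in> f {v}"
  obtains w where "w \<noteq> v" "{v, w} \<in> nonempty_indep_sets V E" "f {v, w} = f {v} - {x}"
proof -
  have Pv: "{v} \<in> nonempty_indep_sets V E" using singleton_in_nonempty_indep_sets[OF G v] .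
  have "card (f {v} - {x}) \<noteq> 0" using c x finite_image[OF Pv] by simp
  then have "f {v} - {x} \<noteq> {}" by (metis card.empty)
  then have "f {v} - {x} \<in> nonempty_indep_sets V' E'"
    by (rule nonempty_indep_sets_subset[OF image_in[OF Pv], rotated]) auto
  then obtain N where N: "N \<in> nonempty_indep_sets V E" "f N = f {v} - {x}" by (rule obtain_preimage)
  have "ar_adj (f {v} - {x}) (f {v})" using ar_adj_insert(1)[of x "f {v} - {x}"] x by (simp add: insert_absorb)
  then have "ar_adj {v} N" using ar_adj_image_iff[OF N(1) Pv] N(2) ar_adj_commute by metis
  moreover have "N \<noteq> {}" using N(1) unfolding nonempty_indep_sets_def by blast
  ultimately obtain w where "w \<noteq> v" "N = {v, w}" by (rule ar_adj_singleton_nonempty)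
  then show ?thesis using N that by blast
qed

lemma doubleton_preimages_nonadjacent:
  assumes v: "v \<in> V" and c: "3 \<le> card (f {v})" and xz: "x \<in> f {v}" "z \<in> f {v}" "x \<noteq> z"
    and w: "w \<noteq> v" "{v, w} \<in> nonempty_indep_sets V E" "f {v, w} = f {v} - {x}"
    and w': "w' \<noteq> v" "{v, w'} \<in> nonempty_indep_sets V E" "f {v, w'} = f {v} - {z}"
  shows "{w, w'} \<in> nonempty_indep_sets V E"
proof -
  have Pv: "{v} \<in> nonempty_indep_sets V E" using singleton_in_nonempty_indep_sets[OF G v] .
  have "card (f {v}) - card {x, z} \<le> card (f {v} - {x, z})" by (rule diff_card_le_card_Diff) simp
  then have "card (f {v} - {x, z}) \<noteq> 0" using c xz(3) by simp
  then have "f {v} - {x, z} \<noteq> {}" by (metis card.empty)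
  then have "f {v} - {x, z} \<in> nonempty_indep_sets V' E'"
    by (rule nonempty_indep_sets_subset[OF image_in[OF Pv], rotated]) auto
  then obtain M where M: "M \<in> nonempty_indep_sets V E" "f M = f {v} - {x, z}" by (rule obtain_preimage)
  have "f {v} - {x} = insert z (f {v} - {x, z})" "f {v} - {z} = insert x (f {v} - {x, z})" using xz by auto
  then have "ar_adj (f {v, w}) (f M)" "ar_adj (f {v, w'}) (f M)"
    using ar_adj_insert(2)[of z "f {v} - {x, z}"] ar_adj_insert(2)[of x "f {v} - {x, z}"] w(3) w'(3) M(2)
    by simp_all
  then have adj: "ar_adj {v, w} M" "ar_adj {v, w'} M" using ar_adj_image_iff M(1) w(2) w'(2) by blast+
  have ne: "{v, w} \<noteq> {v, w'}" using w(3) w'(3) xz by auto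
  have "card {v, w} = card {v, w'}" using w(1) w'(1) by simp
  then have "M = {v, w} \<union> {v, w'} \<or> M = {v, w} \<inter> {v, w'}"
    using ar_adj_common_nbr[OF _ _ _ ne adj] by auto
  moreover have "M \<noteq> {v}" using M(2) xz(1) by auto
  moreover have "{v, w} \<inter> {v, w'} = {v}" using ne by auto
  ultimately have "M = {v, w, w'}" by auto
  then show ?thesis using M(1) by (auto intro: nonempty_indep_sets_subset)
qed

lemma large_image_extends_to_level_set:
  assumes v: "v \<in> V" and c: "3 \<le> card (f {v})"
  obtains Y where "Y \<in> nonempty_indep_sets V E" "card Y = Suc (card (f {v}))"
    "\<forall>z\<in>Y. card (f {z}) = card (f {v})"
proof -
  have "\<exists>w. w \<noteq> v \<and> {v, w} \<in> nonempty_indep_sets V E \<and> f {v, w} = f {v} - {x}"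
    if x: "x \<in> f {v}" for x
  proof -
    have "2 \<le> card (f {v})" using c by simp
    then obtain w where "w \<noteq> v" "{v, w} \<in> nonempty_indep_sets V E" "f {v, w} = f {v} - {x}"
      by (rule doubleton_preimage_minus_point[OF v _ x])
    then show ?thesis by blast
  qed
  then obtain y where y: "\<And>x. x \<in> f {v} \<Longrightarrow>
      y x \<noteq> v \<and> {v, y x} \<in> nonempty_indep_sets V E \<and> f {v, y x} = f {v} - {x}"
    by metis
  have y_inj: "inj_on y (f {v})"
  proof (rule inj_onI)
    fix x z assume "x \<in> f {v}" "z \<in> f {v}" "y x = y z"
    then have "f {v} - {x} = f {v} - {z}" using y by metis
    then show "x = z" using \<open>x \<in> f {v}\<close> \<open>z \<in> f {v}\<close> by blast
  qed
  define Y where "Y = insert v (y ` f {v})"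
  have "Y \<in> nonempty_indep_sets V E"
  proof (rule nonempty_indep_setsI[OF G])
    have "y x \<in> V" if "x \<in> f {v}" for x
      using y[OF that] doubleton_in_nonempty_indep_sets_iff[OF G] by blast
    then show "Y \<subseteq> V" using v unfolding Y_def by blast
    show "Y \<noteq> {}" unfolding Y_def by blast
    have pair: "{y x, y z} \<in> nonempty_indep_sets V E" if "x \<in> f {v}" "z \<in> f {v}" "x \<noteq> z" for x z
      using doubleton_preimages_nonadjacent[OF v c that] y[OF that(1)] y[OF that(2)] by blast
    fix p q assume pq: "p \<in> Y" "q \<in> Y" "p \<noteq> q"
    then consider "p = v" "q \<in> y ` f {v}" | "q = v" "p \<in> y ` f {v}" | "p \<in> y ` f {v}" "q \<in> y ` f {v}"
      unfolding Y_def by blast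
    then show "{p, q} \<in> nonempty_indep_sets V E"
    proof cases
      case 1
      then show ?thesis using y by auto
    next
      case 2
      then show ?thesis using y by (auto simp: insert_commute)
    next
      case 3
      then show ?thesis using pair pq(3) by auto
    qed
  qed
  moreover have "card Y = Suc (card (f {v}))"
    using y finite_image[OF singleton_in_nonempty_indep_sets[OF G v]] card_image[OF y_inj]
    unfolding Y_def by (metis card_insert_disjoint finite_imageI imageE)
  moreover have "\<forall>z\<in>Y. card (f {z}) = card (f {v})"
    using y card_image_singleton_eq unfolding Y_def by (metis imageE insertE)
  ultimately show ?thesis using that by blast
qed

lemma card_image_singleton_le_2:
  assumes "v \<in> V"
  shows "card (f {v}) \<le> 2"
proof (rule ccontr)
  assume "\<not> card (f {v}) \<le> 2"
  then have c: "3 \<le> card (f {v})" by linarith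
  then obtain Y where Y: "Y \<in> nonempty_indep_sets V E" "card Y = Suc (card (f {v}))"
    "\<forall>z\<in>Y. card (f {z}) = card (f {v})"
    by (rule large_image_extends_to_level_set[OF assms])
  have "card (f Y) + card Y = card (f {v}) + 1" using card_image_level[OF _ Y(1,3)] c by simp
  then have "card (f Y) = 0" using Y(2) by simp
  then show False using card_image_pos[OF Y(1)] by simp
qed

lemma card_image_singleton_cases: "v \<in> V \<Longrightarrow> card (f {v}) = 1 \<or> card (f {v}) = 2"
  using card_image_pos[OF singleton_in_nonempty_indep_sets[OF G]] card_image_singleton_le_2 by force

(* f need not map singletons to singletons: if G is the complement of a cycle of length n >= 4,
   its graph of nonempty independent sets is a cycle of length 2 n, whose rotation exchanges
   singletons and pairs. *)
definition doubled :: "'a set" where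
  "doubled = {v \<in> V. card (f {v}) = 2}"

definition doubled_nonedges :: "('a \<times> 'a) set" where
  "doubled_nonedges = {(u, w). u \<in> doubled \<and> w \<in> doubled \<and> u \<noteq> w \<and> (u, w) \<notin> E}"

lemma doubled_closed_nonadj:
  assumes "u \<in> doubled" "w \<in> V" "w \<noteq> u" "(u, w) \<notin> E"
  shows "w \<in> doubled"
proof -
  have "{u, w} \<in> nonempty_indep_sets V E"
    using assms doubleton_in_nonempty_indep_sets_iff[OF G] unfolding doubled_def by blast
  then show ?thesis using card_image_singleton_eq[of u w] assms unfolding doubled_def by auto
qed

lemma card_image_doubled_pair:
  assumes "u \<in> doubled" "w \<in> doubled" "u \<noteq> w" "(u, w) \<notin> E"
  shows "{u, w} \<in> nonempty_indep_sets V E" "card (f {u, w}) = 1"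
proof -
  show P: "{u, w} \<in> nonempty_indep_sets V E"
    using assms doubleton_in_nonempty_indep_sets_iff[OF G] unfolding doubled_def by blast
  have "card (f {u, w}) + card {u, w} = 2 + 1"
    by (rule card_image_level[OF _ P]) (use assms in \<open>auto simp: doubled_def\<close>)
  then show "card (f {u, w}) = 1" using assms(3) by simp
qed

lemma doubled_nonedges_image:
  assumes u: "u \<in> doubled"
  shows "(\<lambda>w. f {u, w}) ` (doubled_nonedges `` {u}) = (\<lambda>x. {x}) ` f {u}"
proof -
  have Pu: "{u} \<in> nonempty_indep_sets V E" and cA: "card (f {u}) = 2"
    using u singleton_in_nonempty_indep_sets[OF G] unfolding doubled_def by auto
  have "f {u, w} \<in> (\<lambda>x. {x}) ` f {u}" if w: "(u, w) \<in> doubled_nonedges" for w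
  proof -
    have w': "w \<in> doubled" "u \<noteq> w" "(u, w) \<notin> E" using w unfolding doubled_nonedges_def by auto
    note P = card_image_doubled_pair[OF u w']
    have "ar_adj {u} {u, w}" using ar_adj_insert(1)[of w "{u}"] w'(2) by (simp add: insert_commute)
    then have "ar_adj (f {u, w}) (f {u})" using ar_adj_image_iff[OF Pu P(1)] ar_adj_commute by blast
    moreover have "card (f {u, w}) < card (f {u})" using P(2) cA by simp
    ultimately have "f {u, w} \<subseteq> f {u}" by (metis ar_adj_card_less finite_image[OF Pu] subset_insertI)
    moreover obtain y where "f {u, w} = {y}" using P(2) card_1_singletonE by blast
    ultimately show ?thesis by blast
  qed
  moreover have "{x} \<in> (\<lambda>w. f {u, w}) ` (doubled_nonedges `` {u})" if x: "x \<in> f {u}" for x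
  proof -
    have "{x} \<in> nonempty_indep_sets V' E'" using nonempty_indep_sets_subset[OF image_in[OF Pu]] x by blast
    then obtain N where N: "N \<in> nonempty_indep_sets V E" "f N = {x}" by (rule obtain_preimage)
    have "ar_adj (f N) (f {u})" using ar_adj_card_2_singleton[OF cA x] N(2) ar_adj_commute by metis
    then have "ar_adj {u} N" using ar_adj_image_iff[OF N(1) Pu] ar_adj_commute by blast
    moreover have "N \<noteq> {}" using N(1) unfolding nonempty_indep_sets_def by blast
    ultimately obtain w where w: "w \<noteq> u" "N = {u, w}" by (rule ar_adj_singleton_nonempty)
    then have "w \<in> V" "(u, w) \<notin> E" using N(1) doubleton_in_nonempty_indep_sets_iff[OF G] by blast+
    then have "(u, w) \<in> doubled_nonedges" using doubled_closed_nonadj[OF u] w(1) u unfolding doubled_nonedges_def by blast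
    then show ?thesis using N(2) w(2) by blast
  qed
  ultimately show ?thesis by blast
qed

lemma two_regular_doubled: "two_regular doubled doubled_nonedges"
proof -
  have "card (doubled_nonedges `` {u}) = 2" if u: "u \<in> doubled" for u
  proof -
    have cA: "card (f {u}) = 2" using u unfolding doubled_def by auto
    have "inj_on (\<lambda>w. f {u, w}) (doubled_nonedges `` {u})"
    proof (rule inj_onI)
      fix w w' assume "w \<in> doubled_nonedges `` {u}" "w' \<in> doubled_nonedges `` {u}" "f {u, w} = f {u, w'}"
      then have "{u, w} = {u, w'}" "w \<noteq> u"
        using image_eq_iff card_image_doubled_pair(1)[OF u] unfolding doubled_nonedges_def by auto
      then show "w = w'" by (metis doubleton_eq_iff)
    qed
    then have "card (doubled_nonedges `` {u}) = card ((\<lambda>x. {x}) ` f {u})"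
      using doubled_nonedges_image[OF u] card_image by metis
    also have "\<dots> = 2" using cA card_image[of "\<lambda>x. {x}" "f {u}"] by simp
    finally show ?thesis .
  qed
  moreover have "fgraph doubled doubled_nonedges"
    using fgraphD(1,3)[OF G] unfolding fgraph_def sym_def doubled_def doubled_nonedges_def by auto
  ultimately show ?thesis unfolding two_regular_def by blast
qed

definition succ :: "'a \<Rightarrow> 'a" where
  "succ = (SOME s. cyclic_orientation doubled doubled_nonedges s)"

definition block :: "'a \<Rightarrow> 'a set" where
  "block v = (if v \<in> doubled then {v, succ v} else {v})"

definition vertex_map :: "'a \<Rightarrow> 'b" where
  "vertex_map v = the_elem (f (block v))"

lemma cyclic_orientation_succ: "cyclic_orientation doubled doubled_nonedges succ"
  unfolding succ_def using two_regular_cyclic_orientation[OF two_regular_doubled] by (rule someI_ex)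

lemma block_doubled:
  assumes "v \<in> doubled"
  shows "block v = {v, succ v}" "card (block v) = 2" "succ v \<in> doubled" "v \<noteq> succ v"
    "(v, succ v) \<notin> E"
  using assms cyclic_orientation_succ unfolding block_def cyclic_orientation_def doubled_nonedges_def
  by auto

lemma block_in:
  assumes "v \<in> V"
  shows "block v \<in> nonempty_indep_sets V E \<and> card (f (block v)) = 1"
proof (cases "v \<in> doubled")
  case True
  then show ?thesis using card_image_doubled_pair[OF True] block_doubled[OF True] by auto
next
  case False
  then show ?thesis
    using assms card_image_singleton_cases[OF assms] singleton_in_nonempty_indep_sets[OF G]
    unfolding block_def doubled_def by auto
qed

lemma image_block: "v \<in> V \<Longrightarrow> f (block v) = {vertex_map v}"
  using block_in unfolding vertex_map_def by (metis card_1_singletonE the_elem_eq)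

lemma block_inj: "inj_on block V"
proof (rule inj_onI)
  fix x y assume xy: "x \<in> V" "y \<in> V" "block x = block y"
  have "card (block x) = 2 \<longleftrightarrow> x \<in> doubled" for x
    using block_doubled[of x] unfolding block_def by auto
  then consider "x \<in> doubled" "y \<in> doubled" | "x \<notin> doubled" "y \<notin> doubled"
    using xy(3) by metis
  then show "x = y"
  proof cases
    case 1
    then show ?thesis
      using xy(3) block_doubled cyclic_orientation_doubleton_inj[OF cyclic_orientation_succ] by metis
  next
    case 2
    then show ?thesis using xy(3) unfolding block_def by simp
  qed
qed

lemma block_mixed_pair:
  assumes uw: "u \<in> V" "w \<in> V" "u \<noteq> w" "u \<notin> doubled" "w \<in> doubled"
  shows "(u, w) \<in> E" "\<not> (\<exists>M\<in>nonempty_indep_sets V E. ar_adj (block u) M \<and> ar_adj (block w) M)"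
proof -
  show "(u, w) \<in> E" using doubled_closed_nonadj[of w u] uw fgraphD(3)[OF G] by blast
  have card: "card (block w) = Suc (card (block u))"
    using block_doubled(2)[OF uw(5)] uw(4) unfolding block_def by simp
  show "\<not> (\<exists>M\<in>nonempty_indep_sets V E. ar_adj (block u) M \<and> ar_adj (block w) M)"
  proof
    assume "\<exists>M\<in>nonempty_indep_sets V E. ar_adj (block u) M \<and> ar_adj (block w) M"
    then obtain M where M: "M \<in> nonempty_indep_sets V E" "ar_adj (block u) M" "ar_adj (block w) M"
      by blast
    have "finite M" "finite (block u)" "finite (block w)"
      using M(1) block_in uw(1,2) finite_indep_set[OF G] unfolding nonempty_indep_sets_def by blast+
    then show False using ar_adj_common_nbr_card[OF _ _ _ M(3) M(2)] card by blast
  qed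
qed

lemma block_common_nbr_iff:
  assumes xy: "x \<in> V" "y \<in> V" "x \<noteq> y"
  shows "(\<exists>M\<in>nonempty_indep_sets V E. ar_adj (block x) M \<and> ar_adj (block y) M) \<longleftrightarrow> (x, y) \<notin> E"
proof -
  consider "x \<notin> doubled" "y \<notin> doubled" | "x \<in> doubled" "y \<in> doubled"
    | "x \<notin> doubled" "y \<in> doubled" | "x \<in> doubled" "y \<notin> doubled" by blast
  then show ?thesis
  proof cases
    case 1
    then show ?thesis using singletons_common_nbr_iff[OF G xy] unfolding block_def by simp
  next
    case 2
    have "block x \<noteq> block y" using block_inj xy by (meson inj_onD)
    moreover have "card (block x) = 2" "card (block y) = 2" using block_doubled(2) 2 by auto
    ultimately have "(\<exists>M\<in>nonempty_indep_sets V E. ar_adj (block x) M \<and> ar_adj (block y) M)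
        \<longleftrightarrow> block x \<inter> block y \<noteq> {}"
      using doubletons_common_nbr_iff block_in xy by blast
    also have "\<dots> \<longleftrightarrow> (x, y) \<in> doubled_nonedges"
      using cyclic_orientation_edge_iff[OF two_regular_doubled cyclic_orientation_succ 2 xy(3)]
        block_doubled 2 by simp
    also have "\<dots> \<longleftrightarrow> (x, y) \<notin> E" using 2 xy(3) unfolding doubled_nonedges_def by blast
    finally show ?thesis .
  next
    case 3
    then show ?thesis using block_mixed_pair xy by blast
  next
    case 4
    then show ?thesis using block_mixed_pair[of y x] xy fgraphD(3)[OF G] by blast
  qed
qed

lemma preimage_of_singleton_is_block:
  assumes Q: "Q \<in> nonempty_indep_sets V E" "card (f Q) = 1" "card Q \<le> 2"
  obtains v where "v \<in> V" "Q = block v"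
proof -
  have "finite Q" "Q \<noteq> {}" using Q(1) finite_indep_set[OF G] unfolding nonempty_indep_sets_def by auto
  then have "0 < card Q" by (simp add: card_gt_0_iff)
  then have "card Q = 1 \<or> card Q = 2" using Q(3) by linarith
  then consider "card Q = 1" | "card Q = 2" by blast
  then show ?thesis
  proof cases
    case 1
    then obtain u where u: "Q = {u}" by (rule card_1_singletonE)
    then have "u \<in> V" "u \<notin> doubled" using Q(1,2) unfolding nonempty_indep_sets_def indep_sets_def indep_def doubled_def by auto
    then show ?thesis using u by (intro that[of u]) (auto simp: block_def)
  next
    case 2
    then obtain u w where uw: "Q = {u, w}" "u \<noteq> w" unfolding card_2_iff by blast
    then have nonadj: "u \<in> V" "w \<in> V" "(u, w) \<notin> E" using Q(1) doubleton_in_nonempty_indep_sets_iff[OF G] by auto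
    have Pu: "{u} \<in> nonempty_indep_sets V E" using singleton_in_nonempty_indep_sets[OF G nonadj(1)] .
    have "ar_adj {u} Q" using ar_adj_insert(1)[of w "{u}"] uw by (simp add: insert_commute)
    then have "ar_adj (f {u}) (f Q)" using ar_adj_image_iff[OF Pu Q(1)] by blast
    then have "card (f {u}) = 2"
      using ar_adj_card[OF _ finite_image[OF Pu] finite_image[OF Q(1)]] Q(2) card_image_pos[OF Pu] by auto
    then have "u \<in> doubled" using nonadj(1) unfolding doubled_def by blast
    moreover have "w \<in> doubled"
      by (rule doubled_closed_nonadj[OF \<open>u \<in> doubled\<close> nonadj(2)]) (use uw(2) nonadj(3) in auto)
    ultimately have "(u, w) \<in> doubled_nonedges" using uw(2) nonadj(3) unfolding doubled_nonedges_def by blast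
    then have "w = succ u \<or> succ w = u"
      using cyclic_orientation_nbr[OF two_regular_doubled cyclic_orientation_succ \<open>u \<in> doubled\<close>] by blast
    then have "Q = block u \<or> Q = block w"
      using block_doubled(1) \<open>u \<in> doubled\<close> \<open>w \<in> doubled\<close> uw(1) by auto
    then show ?thesis using that nonadj(1,2) by blast
  qed
qed

lemma vertex_map_in: "v \<in> V \<Longrightarrow> vertex_map v \<in> V'"
  using image_in[of "block v"] block_in image_block
  unfolding nonempty_indep_sets_def indep_sets_def indep_def by fastforce

lemma vertex_map_onto:
  assumes x: "x \<in> V'"
  shows "x \<in> vertex_map ` V"
proof -
  interpret inv: ar_graph_iso V' E' V E "inv_into (nonempty_indep_sets V E) f"
    by (rule inv_ar_graph_iso)
  have Px: "{x} \<in> nonempty_indep_sets V' E'" using singleton_in_nonempty_indep_sets[OF G' x] .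
  define Q where "Q = inv_into (nonempty_indep_sets V E) f {x}"
  have Q: "Q \<in> nonempty_indep_sets V E" "f Q = {x}"
    unfolding Q_def using inv.image_in[OF Px] bij_betw_inv_into_right[OF bij Px] by auto
  have "card Q \<le> 2" unfolding Q_def by (rule inv.card_image_singleton_le_2[OF x])
  moreover have "card (f Q) = 1" using Q(2) by simp
  ultimately obtain v where "v \<in> V" "Q = block v"
    using preimage_of_singleton_is_block[OF Q(1)] by blast
  then show ?thesis using image_block Q(2) by auto
qed

lemma vertex_map_bij: "bij_betw vertex_map V V'"
proof (rule bij_betw_imageI)
  show "inj_on vertex_map V"
  proof (rule inj_onI)
    fix x y assume xy: "x \<in> V" "y \<in> V" "vertex_map x = vertex_map y"
    then have "f (block x) = f (block y)" using image_block by simp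
    then have "block x = block y" using image_eq_iff block_in xy(1,2) by blast
    then show "x = y" using inj_onD[OF block_inj] xy(1,2) by blast
  qed
  show "vertex_map ` V = V'" using vertex_map_in vertex_map_onto by blast
qed

theorem graph_iso: "graph_iso V E V' E'"
proof -
  have "(x, y) \<in> E \<longleftrightarrow> (vertex_map x, vertex_map y) \<in> E'" if xy: "x \<in> V" "y \<in> V" for x y
  proof (cases "x = y")
    case True
    then show ?thesis using fgraphD(4)[OF G] fgraphD(4)[OF G'] by simp
  next
    case False
    have "vertex_map x \<noteq> vertex_map y" "vertex_map x \<in> V'" "vertex_map y \<in> V'"
      using vertex_map_bij xy False by (auto simp: bij_betw_def dest: inj_onD)
    then have "(vertex_map x, vertex_map y) \<notin> E' \<longleftrightarrow>
        (\<exists>M'\<in>nonempty_indep_sets V' E'. ar_adj (f (block x)) M' \<and> ar_adj (f (block y)) M')"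
      using singletons_common_nbr_iff[OF G'] image_block xy by simp
    also have "\<dots> \<longleftrightarrow> (x, y) \<notin> E"
      using common_nbr_image_iff block_in block_common_nbr_iff xy False by simp
    finally show ?thesis by blast
  qed
  then show ?thesis using vertex_map_bij unfolding graph_iso_def by blast
qed

end

section \<open>The reconfiguration graphs\<close>

lemma redges_subset: "redges R V E k \<subseteq> rverts R V E k \<times> rverts R V E k"
  by (cases R) auto

lemma redges_irrefl: "(I, I) \<notin> redges R V E k"
  by (cases R) auto

lemma redges_eq_empty:
  assumes "rverts R V E k \<subseteq> {{}}"
  shows "redges R V E k = {}"
proof (rule equals0I)
  fix p assume p: "p \<in> redges R V E k"
  then obtain I J where IJ: "p = (I, J)" "I \<in> rverts R V E k" "J \<in> rverts R V E k"
    using redges_subset by blast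
  then have "I = J" using assms by blast
  then show False using p IJ(1) redges_irrefl by blast
qed

lemma rverts_mem: "I \<in> rverts R V E k \<Longrightarrow> indep V E I \<and> k \<le> card I"
  by (cases R) auto

lemma rverts_1:
  assumes "fgraph V E" "R \<noteq> TAR"
  shows "rverts R V E 1 = (\<lambda>v. {v}) ` V"
  using assms(2) fgraphD(4)[OF assms(1)] by (cases R) (auto simp: card_Suc_eq indep_def)

lemma redges_TAR: "redges TAR V E k = {(I, J). I \<in> rverts TAR V E k \<and> J \<in> rverts TAR V E k \<and> ar_adj I J}"
  unfolding ar_adj_def by simp

lemma rverts_TAR_0: "rverts TAR V E 0 = indep_sets V E"
  unfolding indep_sets_def by simp

lemma rverts_TAR_1: "fgraph V E \<Longrightarrow> rverts TAR V E 1 = nonempty_indep_sets V E"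
  using finite_indep_set unfolding nonempty_indep_sets_def indep_sets_def
  by (auto simp: Suc_le_eq card_gt_0_iff)

lemma ar_iso_of_graph_iso_TAR:
  assumes "graph_iso (rverts TAR V E k) (redges TAR V E k) (rverts TAR V' E' k) (redges TAR V' E' k)"
  obtains f where "ar_iso (rverts TAR V E k) (rverts TAR V' E' k) f"
proof -
  obtain f where f: "bij_betw f (rverts TAR V E k) (rverts TAR V' E' k)"
    and edges: "\<forall>I\<in>rverts TAR V E k. \<forall>J\<in>rverts TAR V E k.
       (I, J) \<in> redges TAR V E k \<longleftrightarrow> (f I, f J) \<in> redges TAR V' E' k"
    using assms unfolding graph_iso_def by blast
  have "ar_iso (rverts TAR V E k) (rverts TAR V' E' k) f"
    using f edges bij_betw_apply[OF f] unfolding ar_iso_def redges_TAR by auto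
  then show ?thesis by (rule that)
qed

lemma graph_iso_of_graph_iso_TAR_1:
  assumes G: "fgraph V E" and G': "fgraph V' E'"
    and iso: "graph_iso (rverts TAR V E 1) (redges TAR V E 1) (rverts TAR V' E' 1) (redges TAR V' E' 1)"
  shows "graph_iso V E V' E'"
proof -
  obtain f where "ar_iso (nonempty_indep_sets V E) (nonempty_indep_sets V' E') f"
    using ar_iso_of_graph_iso_TAR[OF iso] unfolding rverts_TAR_1[OF G] rverts_TAR_1[OF G'] .
  then interpret ar_graph_iso V E V' E' f using G G' by (simp add: ar_graph_iso_def ar_graph_iso_axioms_def)
  show ?thesis by (rule graph_iso)
qed

lemma card_indep_nbrs_le:
  assumes G: "fgraph V E" and A: "A \<in> indep_sets V E"
  shows "card {J \<in> indep_sets V E. ar_adj A J} \<le> card V"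
    and "card {J \<in> indep_sets V E. ar_adj A J} = card V \<Longrightarrow> x \<in> V - A \<Longrightarrow> insert x A \<in> indep_sets V E"
proof -
  define h where "h x = (A - {x}) \<union> ({x} - A)" for x
  have AV: "A \<subseteq> V" using A unfolding indep_sets_def indep_def by blast
  have sub: "{J \<in> indep_sets V E. ar_adj A J} \<subseteq> h ` V"
  proof
    fix J assume "J \<in> {J \<in> indep_sets V E. ar_adj A J}"
    then have J: "J \<subseteq> V" "ar_adj A J" unfolding indep_sets_def indep_def by auto
    from J(2) consider x where "x \<notin> A" "J = insert x A" | x where "x \<notin> J" "A = insert x J"
      unfolding ar_adj_iff by blast
    then show "J \<in> h ` V"
    proof cases
      case (1 x)
      then have "J = h x" "x \<in> V" unfolding h_def using J(1) by auto
      then show ?thesis by blast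
    next
      case (2 x)
      then have "J = h x" "x \<in> V" unfolding h_def using AV by auto
      then show ?thesis by blast
    qed
  qed
  have "inj_on h V"
  proof (rule inj_onI)
    fix x y assume "x \<in> V" "y \<in> V" "h x = h y"
    then have "x \<in> h y \<longleftrightarrow> x \<notin> A" unfolding h_def by auto
    then show "x = y" unfolding h_def by auto
  qed
  then have card_h: "card (h ` V) = card V" by (rule card_image)
  have fin: "finite (h ` V)" using fgraphD(1)[OF G] by simp
  show "card {J \<in> indep_sets V E. ar_adj A J} \<le> card V" using card_mono[OF fin sub] card_h by simp
  assume "card {J \<in> indep_sets V E. ar_adj A J} = card V" and x: "x \<in> V - A"
  then have "{J \<in> indep_sets V E. ar_adj A J} = h ` V" using card_subset_eq[OF fin sub] card_h by simp
  moreover have "h x = insert x A" unfolding h_def using x by auto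
  ultimately show "insert x A \<in> indep_sets V E" using x by blast
qed

lemma card_indep_nbrs_empty:
  assumes G: "fgraph V E"
  shows "card {J \<in> indep_sets V E. ar_adj {} J} = card V"
proof -
  have "{J \<in> indep_sets V E. ar_adj {} J} = (\<lambda>v. {v}) ` V"
    using singleton_in_nonempty_indep_sets[OF G]
    unfolding ar_adj_iff nonempty_indep_sets_def indep_sets_def indep_def by auto
  then show ?thesis by (simp add: card_image)
qed

lemma max_degree_isolated:
  assumes G: "fgraph V E" and A: "A \<in> indep_sets V E"
    and deg: "card {J \<in> indep_sets V E. ar_adj A J} = card V" and a: "a \<in> A"
  shows "(a, x) \<notin> E"
proof (cases "x \<in> V - A")
  case True
  then have "insert x A \<in> indep_sets V E" using card_indep_nbrs_le(2)[OF G A deg] by blast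
  then show ?thesis using a unfolding indep_sets_def indep_def by blast
next
  case False
  then show ?thesis using A a fgraphD(2)[OF G] unfolding indep_sets_def indep_def by blast
qed

lemma ar_iso_sym_diff_isolated:
  assumes G: "fgraph V E" and A: "A \<subseteq> V" and iso: "\<And>a x. a \<in> A \<Longrightarrow> (a, x) \<notin> E"
  shows "ar_iso (indep_sets V E) (indep_sets V E) (\<lambda>J. (J - A) \<union> (A - J))"
proof
  let ?t = "\<lambda>J. (J - A) \<union> (A - J)"
  have "?t J \<in> indep_sets V E" if "J \<in> indep_sets V E" for J
    using that A iso fgraphD(3)[OF G] unfolding indep_sets_def indep_def by blast
  moreover have "?t (?t J) = J" for J by blast
  ultimately show "bij_betw ?t (indep_sets V E) (indep_sets V E)"
    by (intro bij_betw_byWitness[of _ ?t]) auto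
  fix I J
  have "(?t I - ?t J) \<union> (?t J - ?t I) = (I - J) \<union> (J - I)" by blast
  then show "ar_adj (?t I) (?t J) \<longleftrightarrow> ar_adj I J" unfolding ar_adj_def by simp
qed

(* The empty set has the maximum degree |V|.  Comparing degrees in both directions, f {} also
   has maximum degree, so its elements are isolated and the symmetric difference with f {} is an
   automorphism; composing with it gives an isomorphism fixing {}. *)
lemma graph_iso_of_graph_iso_TAR_0:
  assumes G: "fgraph V E" and G': "fgraph V' E'"
    and iso: "graph_iso (rverts TAR V E 0) (redges TAR V E 0) (rverts TAR V' E' 0) (redges TAR V' E' 0)"
  shows "graph_iso V E V' E'"
proof -
  obtain f where f: "ar_iso (indep_sets V E) (indep_sets V' E') f"
    using ar_iso_of_graph_iso_TAR[OF iso] unfolding rverts_TAR_0 .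
  interpret ar_iso "indep_sets V E" "indep_sets V' E'" f by (rule f)
  interpret inv: ar_iso "indep_sets V' E'" "indep_sets V E" "inv_into (indep_sets V E) f"
    by (rule inv_ar_iso)
  have empty: "{} \<in> indep_sets V E" "{} \<in> indep_sets V' E'" unfolding indep_sets_def indep_def by auto
  define A where "A = f {}"
  have A: "A \<in> indep_sets V' E'" unfolding A_def by (rule image_in[OF empty(1)])
  have degA: "card {J \<in> indep_sets V' E'. ar_adj A J} = card V"
    unfolding A_def using card_nbrs_image[OF empty(1)] card_indep_nbrs_empty[OF G] by simp
  have "card V' = card {J \<in> indep_sets V E. ar_adj (inv_into (indep_sets V E) f {}) J}"
    using inv.card_nbrs_image[OF empty(2)] card_indep_nbrs_empty[OF G'] by simp
  then have "card V' \<le> card V" using card_indep_nbrs_le(1)[OF G inv.image_in[OF empty(2)]] by simp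
  then have "card {J \<in> indep_sets V' E'. ar_adj A J} = card V'"
    using degA card_indep_nbrs_le(1)[OF G' A] by simp
  then have "ar_iso (indep_sets V' E') (indep_sets V' E') (\<lambda>J. (J - A) \<union> (A - J))"
    using ar_iso_sym_diff_isolated[OF G'] max_degree_isolated[OF G' A] A
    unfolding indep_sets_def indep_def by blast
  then have "ar_iso (indep_sets V E) (indep_sets V' E') ((\<lambda>J. (J - A) \<union> (A - J)) \<circ> f)"
    using ar_iso_comp f by blast
  then have "ar_iso (nonempty_indep_sets V E) (nonempty_indep_sets V' E') ((\<lambda>J. (J - A) \<union> (A - J)) \<circ> f)"
    using ar_iso_remove[OF _ empty(1)] unfolding nonempty_indep_sets_def A_def by fastforce
  then interpret ar_graph_iso V E V' E' "(\<lambda>J. (J - A) \<union> (A - J)) \<circ> f"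
    using G G' by (simp add: ar_graph_iso_def ar_graph_iso_axioms_def)
  show ?thesis by (rule graph_iso)
qed

lemma redges_TS_1_singletons:
  assumes G: "fgraph V E" and xy: "x \<in> V" "y \<in> V"
  shows "({x}, {y}) \<in> redges TS V E 1 \<longleftrightarrow> (x, y) \<in> E"
proof (cases "x = y")
  case True
  then show ?thesis using fgraphD(4)[OF G] by simp
next
  case False
  then have "{x} - {y} = {x}" "{y} - {x} = {y}" by auto
  moreover have "rverts TS V E 1 = (\<lambda>v. {v}) ` V" by (rule rverts_1[OF G]) simp
  ultimately show ?thesis using xy by simp
qed

lemma graph_iso_TS_1:
  assumes G: "fgraph V E"
  shows "graph_iso V E (rverts TS V E 1) (redges TS V E 1)"
proof -
  have "rverts TS V E 1 = (\<lambda>v. {v}) ` V" by (rule rverts_1[OF G]) simp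
  then have "bij_betw (\<lambda>v. {v}) V (rverts TS V E 1)" by (simp add: bij_betw_def)
  moreover have "\<forall>x\<in>V. \<forall>y\<in>V. (x, y) \<in> E \<longleftrightarrow> ({x}, {y}) \<in> redges TS V E 1"
    using redges_TS_1_singletons[OF G] by blast
  ultimately show ?thesis unfolding graph_iso_def by blast
qed

lemma graph_iso_of_graph_iso_TS_1:
  assumes "fgraph V E" "fgraph V' E'"
    and "graph_iso (rverts TS V E 1) (redges TS V E 1) (rverts TS V' E' 1) (redges TS V' E' 1)"
  shows "graph_iso V E V' E'"
  using graph_iso_trans[OF graph_iso_trans[OF graph_iso_TS_1[OF assms(1)] assms(3)]
      graph_iso_sym[OF graph_iso_TS_1[OF assms(2)]]] .


lemma rverts_redges_0:
  assumes G: "fgraph V E" and R: "R \<noteq> TAR"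
  shows "rverts R V E 0 = {{}}" "redges R V E 0 = {}"
proof -
  show "rverts R V E 0 = {{}}"
  proof (rule set_eqI)
    fix I
    have "I \<in> rverts R V E 0 \<longleftrightarrow> indep V E I \<and> card I = 0" using R by (cases R) auto
    also have "\<dots> \<longleftrightarrow> I = {}"
      using finite_indep_set[OF G, of I] unfolding indep_sets_def by (auto simp: indep_def)
    finally show "I \<in> rverts R V E 0 \<longleftrightarrow> I \<in> {{}}" by simp
  qed
  then show "redges R V E 0 = {}" by (intro redges_eq_empty) simp
qed

lemma rverts_redges_large:
  assumes small: "\<And>I. indep V E I \<Longrightarrow> card I \<le> 1" and k: "2 \<le> k"
  shows "rverts R V E k = {}" "redges R V E k = {}"
proof -
  show "rverts R V E k = {}" using small k rverts_mem by fastforce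
  then show "redges R V E k = {}" by (intro redges_eq_empty) simp
qed

lemma fgraph_examples:
  "fgraph {0::nat} {}" "fgraph {0::nat, 1} {}" "fgraph {0::nat, 1} {(0, 1), (1, 0)}"
  unfolding fgraph_def sym_def by auto

lemma indep_card_le_1_examples:
  "indep {0::nat} {} I \<Longrightarrow> card I \<le> 1" "indep {0::nat, 1} {(0, 1), (1, 0)} I \<Longrightarrow> card I \<le> 1"
proof -
  show "indep {0::nat} {} I \<Longrightarrow> card I \<le> 1"
    unfolding indep_def using card_mono[of "{0::nat}" I] by simp
  assume "indep {0::nat, 1} {(0, 1), (1, 0)} I"
  then have "I \<subseteq> {0} \<or> I \<subseteq> {1}" unfolding indep_def by auto
  then show "card I \<le> 1" using card_mono[of "{0::nat}" I] card_mono[of "{1::nat}" I] by auto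
qed

lemma not_graph_iso_examples:
  "\<not> graph_iso {0::nat} {} {0::nat, 1} {(0, 1), (1, 0)}"
  "\<not> graph_iso {0::nat, 1} {} {0::nat, 1} {(0, 1), (1, 0)}"
proof -
  show "\<not> graph_iso {0::nat} {} {0::nat, 1} {(0, 1), (1, 0)}"
    using graph_iso_card by fastforce
  show "\<not> graph_iso {0::nat, 1} {} {0::nat, 1} {(0, 1), (1, 0)}"
    using graph_iso_edgeless[OF _ fgraph_examples(3)] by blast
qed

lemma graph_iso_reconf_K1_K2:
  assumes "k = 0 \<and> R \<noteq> TAR \<or> 2 \<le> k"
  shows "graph_iso (rverts R {0::nat} {} k) (redges R {0::nat} {} k)
    (rverts R {0::nat, 1} {(0, 1), (1, 0)} k) (redges R {0::nat, 1} {(0, 1), (1, 0)} k)"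
  using assms rverts_redges_0[OF fgraph_examples(1)] rverts_redges_0[OF fgraph_examples(3)]
    rverts_redges_large[OF indep_card_le_1_examples(1)] rverts_redges_large[OF indep_card_le_1_examples(2)]
    graph_iso_refl by metis

lemma graph_iso_reconf_TJ_2K1_K2:
  "graph_iso (rverts TJ {0::nat, 1} {} 1) (redges TJ {0::nat, 1} {} 1)
    (rverts TJ {0::nat, 1} {(0, 1), (1, 0)} 1) (redges TJ {0::nat, 1} {(0, 1), (1, 0)} 1)"
proof -
  have "rverts TJ {0::nat, 1} {} 1 = (\<lambda>v. {v}) ` {0, 1}"
    by (rule rverts_1[OF fgraph_examples(2)]) simp
  moreover have "rverts TJ {0::nat, 1} {(0, 1), (1, 0)} 1 = (\<lambda>v. {v}) ` {0, 1}"
    by (rule rverts_1[OF fgraph_examples(3)]) simp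
  ultimately have "rverts TJ {0::nat, 1} {} 1 = rverts TJ {0::nat, 1} {(0, 1), (1, 0)} 1" by simp
  moreover have "redges TJ {0::nat, 1} {} 1 = redges TJ {0::nat, 1} {(0, 1), (1, 0)} 1"
    by (simp only: redges.simps calculation)
  ultimately show ?thesis using graph_iso_refl by metis
qed

theorem theorem1p8:
  fixes R :: rule and k :: nat
  shows "((R = TS \<and> k = 1) \<or> (R = TAR \<and> k \<le> 1) \<longrightarrow>
           (\<forall>(V :: 'a set) E (V' :: 'b set) E'. fgraph V E \<longrightarrow> fgraph V' E' \<longrightarrow>
              graph_iso (rverts R V E k) (redges R V E k) (rverts R V' E' k) (redges R V' E' k) \<longrightarrow>
              graph_iso V E V' E'))
       \<and> (\<not> ((R = TS \<and> k = 1) \<or> (R = TAR \<and> k \<le> 1)) \<longrightarrow>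
           (\<exists>(V :: nat set) E (V' :: nat set) E'. fgraph V E \<and> fgraph V' E' \<and>
              \<not> graph_iso V E V' E' \<and>
              graph_iso (rverts R V E k) (redges R V E k) (rverts R V' E' k) (redges R V' E' k)))"
proof (intro conjI impI allI)
  fix V :: "'a set" and E :: "('a \<times> 'a) set" and V' :: "'b set" and E' :: "('b \<times> 'b) set"
  assume "(R = TS \<and> k = 1) \<or> (R = TAR \<and> k \<le> 1)" and G: "fgraph V E" "fgraph V' E'"
    and iso: "graph_iso (rverts R V E k) (redges R V E k) (rverts R V' E' k) (redges R V' E' k)"
  then consider "R = TS" "k = 1" | "R = TAR" "k = 0" | "R = TAR" "k = 1" by fastforce
  then show "graph_iso V E V' E'"
    using iso graph_iso_of_graph_iso_TS_1[OF G] graph_iso_of_graph_iso_TAR_0[OF G]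
      graph_iso_of_graph_iso_TAR_1[OF G] by cases simp_all
next
  assume "\<not> ((R = TS \<and> k = 1) \<or> (R = TAR \<and> k \<le> 1))"
  then consider "k = 0 \<and> R \<noteq> TAR \<or> 2 \<le> k" | "k = 1" "R = TJ" by (cases R) linarith+
  then show "\<exists>(V :: nat set) E (V' :: nat set) E'. fgraph V E \<and> fgraph V' E' \<and>
      \<not> graph_iso V E V' E' \<and>
      graph_iso (rverts R V E k) (redges R V E k) (rverts R V' E' k) (redges R V' E' k)"
  proof cases
    case 1
    then show ?thesis
      using graph_iso_reconf_K1_K2 fgraph_examples not_graph_iso_examples(1) by blast
  next
    case 2
    then show ?thesis
      using graph_iso_reconf_TJ_2K1_K2 fgraph_examples not_graph_iso_examples(2) by blast
  qed
qed

end
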